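(* For every $\delta>0$, every $k\ge 1$ and every $j\in\omega$ there is $N_0$ such that for every $N\ge N_0$ and every $j$ collections $\mathcal{A}_0,\dots,\mathcal{A}_{j-1}\subseteq\mathcal{P}(N)$, each $k$-large in $N$ and upward closed, there exists $Z\subseteq N$ with $|Z|<(1/k+\delta)N$ and $Z\in\bigcap_{j'<j}\mathcal{A}_{j'}$.
   Context: Identify $N$ with $\{0,\dots,N-1\}$. A collection $\mathcal{A}\subseteq\mathcal{P}(N)$ is $k$-large in $N$ if for every partition of $N$ into $k$ pieces $N_0,\dots,N_{k-1}$ there is $i<k$ with $N_i\in\mathcal{A}$. $\mathcal{A}$ is upward closed if $B\in\mathcal{A}$ and $B\subseteq A\subseteq N$ imply $A\in\mathcal{A}$. *)

theory Defs
  imports Main Complex_Main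
begin

text \<open>N is identified with {0..<N}. A partition of N into k (possibly empty) pieces
  N_0,...,N_{k-1} is given by a colouring c with c x < k for x < N; N_i = {x<N. c x = i}.\<close>

definition k_large :: "nat \<Rightarrow> nat \<Rightarrow> nat set set \<Rightarrow> bool" where
  "k_large k N \<A> \<longleftrightarrow>
     (\<forall>c :: nat \<Rightarrow> nat. (\<forall>x<N. c x < k) \<longrightarrow> (\<exists>i<k. {x\<in>{0..<N}. c x = i} \<in> \<A>))"

definition upward_closed :: "nat \<Rightarrow> nat set set \<Rightarrow> bool" where
  "upward_closed N \<A> \<longleftrightarrow> (\<forall>B A. B \<in> \<A> \<and> B \<subseteq> A \<and> A \<subseteq> {0..<N} \<longrightarrow> A \<in> \<A>)"

end

theory Submission
  imports Defs "HOL-Library.Ramsey" "HOL-Library.FuncSet"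
begin

text \<open>Choose q much larger than k and then L large, and label the points y < N periodically
  by all q^n functions S_y : n -> q. Reading S_y along an L-subset x of n gives a word of
  length L; call it good if it has no letter below k, or its first letter below k (the marker)
  sits at a position p < k, or p plus the marker is divisible by k. Good words have density at
  most (1 - k/q)^L + k^2/q + 1/k, so the set Y_x of points whose word on x is good has fewer
  than (1/k + delta) N elements. Conversely, among the k windows of length L of any word of
  length L + k - 1 one is good, so for every (L + k - 1)-subset H of n the sets Y_x, x a window
  of H, cover N, and k-largeness with upward closure puts one of them into each family.
  Ramsey's theorem for L-subsets of a large enough n then yields one x with Y_x in all j
  families.\<close>

lemma k_large_cover:
  assumes "k_large k N \<A>" and "upward_closed N \<A>"
    and "\<forall>l<k. C l \<subseteq> {0..<N}" and "\<forall>y<N. \<exists>l<k. y \<in> C l"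
  shows "\<exists>l<k. C l \<in> \<A>"
proof -
  define c where "c y = (LEAST l. l < k \<and> y \<in> C l)" for y
  have c: "c y < k \<and> y \<in> C (c y)" if "y < N" for y
    unfolding c_def by (rule LeastI_ex) (use assms(4) that in blast)
  then obtain l where "l < k" and "{y \<in> {0..<N}. c y = l} \<in> \<A>"
    using assms(1) unfolding k_large_def by blast
  moreover have "{y \<in> {0..<N}. c y = l} \<subseteq> C l" using c by auto
  ultimately show ?thesis
    using assms(2,3) unfolding upward_closed_def by blast
qed

lemma ramsey_common_witness:
  fixes j L M :: nat
  assumes "L \<le> M"
  obtains n :: nat where
    "\<And>P. \<forall>H \<in> [{..<n}]\<^bsup>M\<^esup>. \<forall>i<j. \<exists>x \<in> [H]\<^bsup>L\<^esup>. P i x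
       \<Longrightarrow> \<exists>x \<in> [{..<n}]\<^bsup>L\<^esup>. \<forall>i<j. P i x"
proof -
  \<comment> \<open>Colour an L-set by the first index i with \<open>\<not> P i x\<close>, and by the extra colour j
    if there is none.\<close>
  obtain n :: nat where ram: "partn_lst {..<n} (replicate (Suc j) M) L"
    using ramsey_full by blast
  have "\<exists>x \<in> [{..<n}]\<^bsup>L\<^esup>. \<forall>i<j. P i x"
    if dense: "\<forall>H \<in> [{..<n}]\<^bsup>M\<^esup>. \<forall>i<j. \<exists>x \<in> [H]\<^bsup>L\<^esup>. P i x" for P
  proof -
    define f where "f x = (if \<forall>i<j. P i x then j else LEAST i. i < j \<and> \<not> P i x)" for x
    have f: "f x \<le> j \<and> (f x < j \<longrightarrow> \<not> P (f x) x) \<and> (f x = j \<longrightarrow> (\<forall>i<j. P i x))" for x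
      using LeastI_ex[of "\<lambda>i. i < j \<and> \<not> P i x"] by (force simp: f_def)
    then have "f \<in> [{..<n}]\<^bsup>L\<^esup> \<rightarrow> {..<Suc j}" by (simp add: le_imp_less_Suc)
    then obtain i H where i: "i < Suc j" and H: "H \<in> [{..<n}]\<^bsup>M\<^esup>"
      and hom: "f ` [H]\<^bsup>L\<^esup> \<subseteq> {i}"
      using partn_lstE[OF ram] by (metis length_replicate nth_replicate)
    have Hn: "[H]\<^bsup>L\<^esup> \<subseteq> [{..<n}]\<^bsup>L\<^esup>" using H nsets_mono by (auto simp: nsets_def)
    show ?thesis
    proof (cases "i = j")
      case True
      obtain x where "x \<subseteq> H" "card x = L" "finite x"
        using obtain_subset_with_card_n[of L H] H assms by (auto simp: nsets_def)
      then have "x \<in> [H]\<^bsup>L\<^esup>" by (simp add: nsets_def)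
      then show ?thesis using hom Hn f[of x] True by blast
    next
      case False
      then obtain x where "x \<in> [H]\<^bsup>L\<^esup>" "P i x" using dense H i less_Suc_eq by blast
      then show ?thesis using hom f[of x] False i by auto
    qed
  qed
  then show ?thesis using that by blast
qed

lemma card_residue_preimage_le:
  assumes "m > 0" and "finite T"
  shows "card {y \<in> {0..<N}. y mod m \<in> T} \<le> (N div m + 1) * card T"
proof -
  have "{y \<in> {0..<N}. y mod m \<in> T} \<subseteq> (\<lambda>(a, r). a * m + r) ` ({..N div m} \<times> T)"
  proof
    fix y assume y: "y \<in> {y \<in> {0..<N}. y mod m \<in> T}"
    then have "y div m \<le> N div m" by (simp add: div_le_mono)
    then show "y \<in> (\<lambda>(a, r). a * m + r) ` ({..N div m} \<times> T)"
      using y by (intro image_eqI[of _ _ "(y div m, y mod m)"]) auto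
  qed
  then have "card {y \<in> {0..<N}. y mod m \<in> T} \<le> card ({..N div m} \<times> T)"
    using assms(2) by (meson card_image_le card_mono finite_SigmaI finite_atMost finite_imageI le_trans)
  then show ?thesis by (simp add: card_cartesian_product)
qed

lemma card_periodic_preimage_le:
  assumes "bij_betw e {0..<m} U" and "Z \<subseteq> U" and "m > 0"
  shows "real (card {y \<in> {0..<N}. e (y mod m) \<in> Z}) \<le> real N * real (card Z) / real m + real m"
proof -
  define T where "T = {r \<in> {0..<m}. e r \<in> Z}"
  have "inj_on e T" using assms(1) by (auto simp: T_def bij_betw_def inj_on_def)
  moreover have "e ` T = Z" using assms(1,2) unfolding T_def bij_betw_def by blast
  ultimately have "card T = card Z" by (metis card_image)
  have "T \<subseteq> {0..<m}" by (auto simp: T_def)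
  then have "card T \<le> m" using card_mono[of "{0..<m}" T] by simp
  have preimage: "{y \<in> {0..<N}. e (y mod m) \<in> Z} = {y \<in> {0..<N}. y mod m \<in> T}"
    using assms(3) by (auto simp: T_def)
  have "card {y \<in> {0..<N}. e (y mod m) \<in> Z} \<le> (N div m + 1) * card T"
    unfolding preimage by (rule card_residue_preimage_le[OF assms(3)]) (simp add: T_def)
  then have "real (card {y \<in> {0..<N}. e (y mod m) \<in> Z}) \<le> real ((N div m + 1) * card T)"
    by (simp only: of_nat_le_iff)
  also have "\<dots> = real (N div m) * real (card T) + real (card T)"
    by (simp add: algebra_simps)
  also have "\<dots> \<le> real N / real m * real (card T) + real m"
    using of_nat_div_le_of_nat[of N m] \<open>card T \<le> m\<close> by (intro add_mono mult_right_mono) simp_all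
  finally show ?thesis using \<open>card T = card Z\<close> by simp
qed

lemma card_PiE_constrained:
  assumes "finite I" and "J \<subseteq> I"
  shows "card {f \<in> I \<rightarrow>\<^sub>E X. \<forall>b \<in> J. f b \<in> Y}
           = card (X \<inter> Y) ^ card J * card X ^ (card I - card J)"
proof -
  have "{f \<in> I \<rightarrow>\<^sub>E X. \<forall>b \<in> J. f b \<in> Y} = (\<Pi>\<^sub>E b \<in> I. if b \<in> J then X \<inter> Y else X)"
    using assms(2) by (auto simp: PiE_def Pi_def extensional_def split: if_splits)
  moreover have "(\<Prod>b \<in> I. card (if b \<in> J then X \<inter> Y else X))
                   = card (X \<inter> Y) ^ card J * card X ^ (card I - card J)"
    using assms by (simp add: if_distrib prod.If_cases Int_absorb1 card_Diff_subset finite_subset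
        flip: Diff_eq)
  ultimately show ?thesis using assms(1) by (simp add: card_PiE)
qed

lemma map_fun_upd_nth:
  assumes "distinct as" and "p < length as"
  shows "map (S(as ! p := x)) as = (map S as)[p := x]"
  using assms by (intro nth_equalityI) (auto simp: nth_list_update nth_eq_iff_index_eq)

lemma mod_add_eq_0_unique:
  fixes a b k p :: nat
  assumes "a < k" and "b < k" and "(p + a) mod k = 0" and "(p + b) mod k = 0"
  shows "a = b"
  using assms by (metis add.assoc add.commute add_0 mod_add_left_eq mod_less)

lemma windows_in_nsets:
  fixes H :: "'a :: linorder set"
  assumes "H \<in> [A]\<^bsup>(L + k - 1)\<^esup>" and "l < k"
  defines "w \<equiv> take L (drop l (sorted_list_of_set H))"
  shows "set w \<in> [H]\<^bsup>L\<^esup>" and "sorted_list_of_set (set w) = w"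
proof -
  have H: "finite H" "card H = L + k - 1" using assms(1) by (auto simp: nsets_def)
  have "distinct w" and "sorted w"
    using H by (auto simp: w_def sorted_wrt_take sorted_wrt_drop)
  moreover have "length w = L" using H assms(2) by (simp add: w_def)
  moreover have "set w \<subseteq> H"
    using H set_take_subset set_drop_subset unfolding w_def by (metis set_sorted_list_of_set subset_trans)
  ultimately show "set w \<in> [H]\<^bsup>L\<^esup>" and "sorted_list_of_set (set w) = w"
    by (auto simp: nsets_def distinct_card sorted_list_of_set.idem_if_sorted_distinct)
qed

text \<open>\<open>marker_pos\<close> is a junk value when no letter is below k; the lemmas about it
  assume that some letter is.\<close>

definition marker_pos :: "nat \<Rightarrow> nat list \<Rightarrow> nat" where
  "marker_pos k w = (LEAST i. i < length w \<and> w ! i < k)"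

definition marker_residue :: "nat \<Rightarrow> nat list \<Rightarrow> nat" where
  "marker_residue k w = (marker_pos k w + w ! marker_pos k w) mod k"

definition good_word :: "nat \<Rightarrow> nat list \<Rightarrow> bool" where
  "good_word k w \<longleftrightarrow> (\<forall>a \<in> set w. k \<le> a) \<or> marker_pos k w < k \<or> marker_residue k w = 0"

lemma marker_pos_eq_iff:
  assumes "\<exists>a \<in> set w. a < k"
  shows "marker_pos k w = p \<longleftrightarrow> p < length w \<and> w ! p < k \<and> (\<forall>t<p. k \<le> w ! t)"
proof
  assume p: "marker_pos k w = p"
  obtain i where "i < length w" "w ! i < k" using assms by (auto simp: in_set_conv_nth)
  then have "p < length w \<and> w ! p < k"
    using LeastI[of "\<lambda>i. i < length w \<and> w ! i < k" i] by (simp add: p[symmetric] marker_pos_def)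
  moreover have "k \<le> w ! t" if "t < p" for t
    using not_less_Least[of t "\<lambda>i. i < length w \<and> w ! i < k"] that calculation
    unfolding p[symmetric] marker_pos_def by auto
  ultimately show "p < length w \<and> w ! p < k \<and> (\<forall>t<p. k \<le> w ! t)" by blast
next
  assume "p < length w \<and> w ! p < k \<and> (\<forall>t<p. k \<le> w ! t)"
  then show "marker_pos k w = p"
    unfolding marker_pos_def by (intro Least_equality) (auto simp: not_less[symmetric])
qed

lemma marker_pos_update:
  assumes "\<exists>a \<in> set w. a < k" and "x < k"
  shows "marker_pos k (w[marker_pos k w := x]) = marker_pos k w"
  using assms marker_pos_eq_iff[OF assms(1), of "marker_pos k w"]
  by (subst marker_pos_eq_iff) (auto simp: nth_list_update intro!: bexI[OF _ set_update_memI])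

lemma marker_residue_update:
  assumes "\<exists>a \<in> set w. a < k" and "marker_residue k w = 0" and "c < k"
  shows "marker_residue k (w[marker_pos k w := (w ! marker_pos k w + c) mod k]) = c"
proof -
  define p where "p = marker_pos k w"
  have "p < length w" and "k > 0"
    using marker_pos_eq_iff[OF assms(1), of p] assms(3) by (simp_all add: p_def)
  then have "marker_residue k (w[p := (w ! p + c) mod k]) = (p + (w ! p + c) mod k) mod k"
    using marker_pos_update[OF assms(1), of "(w ! p + c) mod k"]
    by (simp add: marker_residue_def p_def)
  also have "\<dots> = ((p + w ! p) mod k + c) mod k" by (simp add: mod_add_right_eq mod_add_left_eq add.assoc)
  also have "\<dots> = c" using assms(2,3) by (simp add: marker_residue_def p_def)
  finally show ?thesis by (simp add: p_def)
qed

lemma good_window_exists: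
  assumes "k \<ge> 1" and "length W = L + k - 1"
  shows "\<exists>l<k. good_word k (take L (drop l W))"
  \<comment> \<open>If the first window is bad, its marker sits at some p \<open>\<ge>\<close> k with residue l \<open>\<noteq>\<close> 0;
    moving the window l steps to the right moves the marker to p - l, with residue 0.\<close>
proof (cases "good_word k (take L W)")
  case True
  then show ?thesis using assms(1) by (intro exI[of _ 0]) auto
next
  case False
  define v where "v = take L W"
  have "\<exists>a \<in> set v. a < k" using False by (auto simp: good_word_def v_def not_le)
  note v_first = marker_pos_eq_iff[OF this]
  define p where "p = marker_pos k v"
  have p: "p < L" "W ! p < k" "\<forall>t<p. k \<le> W ! t"
    using v_first[of p] assms(2) by (auto simp: p_def v_def)
  have "v ! p = W ! p" using p(1) by (simp add: v_def)
  then have "k \<le> p" and "(p + W ! p) mod k \<noteq> 0"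
    using False by (simp_all add: good_word_def marker_residue_def v_def[symmetric] p_def[symmetric] not_less)
  define l where "l = (p + W ! p) mod k"
  have "l < k" using assms(1) by (simp add: l_def)
  have "l \<le> p" using \<open>l < k\<close> \<open>k \<le> p\<close> by simp
  define u where "u = take L (drop l W)"
  have u: "t < L \<Longrightarrow> u ! t = W ! (l + t)" for t
    using assms(2) \<open>l < k\<close> by (simp add: u_def)
  have "length u = L" using assms(2) \<open>l < k\<close> by (simp add: u_def)
  have u_p: "p - l < length u" "u ! (p - l) = W ! p"
    using u[of "p - l"] p(1) \<open>l \<le> p\<close> \<open>length u = L\<close> by simp_all
  then have "\<exists>a \<in> set u. a < k" using p(2) nth_mem by metis
  moreover have "\<forall>t < p - l. k \<le> u ! t" using u p by simp
  ultimately have "marker_pos k u = p - l" using u_p p(2) by (simp add: marker_pos_eq_iff)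
  moreover have "(p - l + W ! p) mod k = 0"
    using \<open>l \<le> p\<close> by (simp add: l_def minus_mod_eq_mult_div)
  ultimately have "good_word k u" using u_p by (simp add: good_word_def marker_residue_def)
  then show ?thesis using \<open>l < k\<close> u_def by blast
qed

lemma card_no_small_letter:
  assumes "k \<le> q" and "q > 0" and "distinct as" and "set as \<subseteq> {..<n}"
  shows "real (card {S \<in> {..<n} \<rightarrow>\<^sub>E {..<q}. \<forall>a \<in> set (map S as). k \<le> a})
           = (1 - real k / real q) ^ length as * real q ^ n"
proof -
  have "length as \<le> n"
    using card_mono[OF _ assms(4)] assms(3) by (simp add: distinct_card)
  have "{..<q} \<inter> {k..} = {k..<q}" by auto
  then have "real (card {S \<in> {..<n} \<rightarrow>\<^sub>E {..<q}. \<forall>a \<in> set (map S as). k \<le> a})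
               = real (q - k) ^ length as * real q ^ (n - length as)"
    using card_PiE_constrained[of "{..<n}" "set as" "{..<q}" "{k..}"] assms(3,4)
    by (simp add: distinct_card)
  also have "real (q - k) = (1 - real k / real q) * real q"
    using assms(1,2) by (simp add: of_nat_diff field_simps)
  finally show ?thesis
    using \<open>length as \<le> n\<close> by (simp add: power_mult_distrib mult.assoc flip: power_add)
qed

lemma card_small_letter_at_le:
  assumes "a < n"
  shows "card {S \<in> {..<n} \<rightarrow>\<^sub>E {..<q}. S a < k} \<le> k * q ^ (n - 1)"
proof -
  have "card ({..<q} \<inter> {..<k}) \<le> k"
    by (metis card_lessThan card_mono finite_lessThan inf_le2)
  then show ?thesis
    using card_PiE_constrained[of "{..<n}" "{a}" "{..<q}" "{..<k}"] assms by simp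
qed

lemma card_early_small_letter_le:
  assumes "set as \<subseteq> {..<n}" and "q > 0"
  shows "real (card (\<Union>i < min k (length as). {S \<in> {..<n} \<rightarrow>\<^sub>E {..<q}. S (as ! i) < k}))
           \<le> real k * real k / real q * real q ^ n"
proof (cases "as = []")
  case False
  then have "n > 0" using assms(1) by (cases as) auto
  have "card (\<Union>i < min k (length as). {S \<in> {..<n} \<rightarrow>\<^sub>E {..<q}. S (as ! i) < k})
          \<le> (\<Sum>i < min k (length as). card {S \<in> {..<n} \<rightarrow>\<^sub>E {..<q}. S (as ! i) < k})"
    by (rule card_UN_le) simp
  also have "\<dots> \<le> (\<Sum>i < min k (length as). k * q ^ (n - 1))"
  proof (rule sum_mono)
    fix i assume "i \<in> {..<min k (length as)}"
    then have "as ! i < n" using assms(1) nth_mem[of i as] by force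
    then show "card {S \<in> {..<n} \<rightarrow>\<^sub>E {..<q}. S (as ! i) < k} \<le> k * q ^ (n - 1)"
      by (rule card_small_letter_at_le)
  qed
  also have "\<dots> \<le> k * (k * q ^ (n - 1))" by simp
  finally have "real (card (\<Union>i < min k (length as). {S \<in> {..<n} \<rightarrow>\<^sub>E {..<q}. S (as ! i) < k}))
                  \<le> real (k * (k * q ^ (n - 1)))" by (simp only: of_nat_le_iff)
  also have "\<dots> = real k * real k / real q * real q ^ n"
    using \<open>q > 0\<close> \<open>n > 0\<close> by (cases n) simp_all
  finally show ?thesis .
qed simp

lemma marker_shift:
  assumes "distinct as" and "\<exists>a \<in> set (map S as). a < k" and "marker_residue k (map S as) = 0"
    and "c < k"
  defines "p \<equiv> marker_pos k (map S as)"
  shows "p < length as" and "S (as ! p) < k" and "(p + S (as ! p)) mod k = 0"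
    and "marker_pos k (map (S(as ! p := (S (as ! p) + c) mod k)) as) = p"
    and "marker_residue k (map (S(as ! p := (S (as ! p) + c) mod k)) as) = c"
proof -
  show p: "p < length as" "S (as ! p) < k"
    using marker_pos_eq_iff[OF assms(2), of p] by (auto simp: p_def)
  show "(p + S (as ! p)) mod k = 0"
    using assms(3) p(1) by (simp add: marker_residue_def p_def)
  have "map (S(as ! p := (S (as ! p) + c) mod k)) as = (map S as)[p := (map S as ! p + c) mod k]"
    using map_fun_upd_nth[OF assms(1) p(1)] p(1) by simp
  moreover have "(map S as ! p + c) mod k < k" using assms(4) by simp
  ultimately show "marker_pos k (map (S(as ! p := (S (as ! p) + c) mod k)) as) = p"
    and "marker_residue k (map (S(as ! p := (S (as ! p) + c) mod k)) as) = c"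
    using marker_pos_update[OF assms(2)] marker_residue_update[OF assms(2-4)] by (simp_all add: p_def)
qed

lemma card_marker_residue_zero_le:
  assumes "1 \<le> k" and "k \<le> q" and "distinct as" and "set as \<subseteq> {..<n}"
  shows "k * card {S \<in> {..<n} \<rightarrow>\<^sub>E {..<q}.
                  (\<exists>a \<in> set (map S as). a < k) \<and> marker_residue k (map S as) = 0} \<le> q ^ n"
  \<comment> \<open>Adding c to the marker modulo k keeps it a marker and makes the residue c, so
    \<open>(S, c) \<mapsto> shift (S, c)\<close> injects \<open>G \<times> {..<k}\<close> into the cube.\<close>
proof -
  define G where "G = {S \<in> {..<n} \<rightarrow>\<^sub>E {..<q}.
                  (\<exists>a \<in> set (map S as). a < k) \<and> marker_residue k (map S as) = 0}"
  define pos where "pos S = as ! marker_pos k (map S as)" for S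
  define shift where "shift = (\<lambda>(S, c). S(pos S := (S (pos S) + c) mod k))"
  have shifted: "marker_pos k (map S as) < length as" "S (pos S) < k"
      "(marker_pos k (map S as) + S (pos S)) mod k = 0"
      "marker_pos k (map (shift (S, c)) as) = marker_pos k (map S as)"
      "marker_residue k (map (shift (S, c)) as) = c"
    if "S \<in> G" and "c < k" for S c
    using marker_shift[OF assms(3) _ _ \<open>c < k\<close>, of S] that
    by (simp_all add: G_def shift_def pos_def)
  have "shift (S, c) \<in> {..<n} \<rightarrow>\<^sub>E {..<q}" if "S \<in> G" and "c < k" for S c
  proof -
    have "pos S < n" using nth_mem[OF shifted(1)[OF that]] assms(4) by (auto simp: pos_def)
    moreover have "(S (pos S) + c) mod k < q"
      using assms(1,2) mod_less_divisor[of k "S (pos S) + c"] by linarith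
    ultimately show ?thesis using \<open>S \<in> G\<close> by (auto simp: G_def shift_def PiE_iff extensional_def)
  qed
  then have "shift ` (G \<times> {..<k}) \<subseteq> {..<n} \<rightarrow>\<^sub>E {..<q}" by auto
  moreover have "inj_on shift (G \<times> {..<k})"
  proof (rule inj_onI, clarify)
    fix S c S' c' assume S: "S \<in> G" "c < k" and S': "S' \<in> G" "c' < k"
      and eq: "shift (S, c) = shift (S', c')"
    have "c = c'" using shifted(5)[OF S] shifted(5)[OF S'] eq by metis
    have marker: "marker_pos k (map S as) = marker_pos k (map S' as)"
      using shifted(4)[OF S] shifted(4)[OF S'] eq by metis
    then have "pos S = pos S'" by (simp add: pos_def)
    have "S (pos S) = S' (pos S)"
      using mod_add_eq_0_unique shifted(2,3)[OF S] shifted(2,3)[OF S'] marker \<open>pos S = pos S'\<close>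
      by metis
    then have "S = S'"
      using eq \<open>pos S = pos S'\<close> by (auto simp: shift_def fun_eq_iff split: if_splits)
    then show "S = S' \<and> c = c'" using \<open>c = c'\<close> by simp
  qed
  ultimately have "card (G \<times> {..<k}) \<le> card ({..<n} \<rightarrow>\<^sub>E {..<q})"
    by (intro card_inj_on_le) (simp_all add: finite_PiE)
  then show ?thesis by (simp add: G_def card_cartesian_product card_PiE mult.commute)
qed

lemma card_good_words_le:
  assumes "1 \<le> k" and "k \<le> q" and "distinct as" and "set as \<subseteq> {..<n}"
  shows "real (card {S \<in> {..<n} \<rightarrow>\<^sub>E {..<q}. good_word k (map S as)})
           \<le> ((1 - real k / real q) ^ length as + real k * real k / real q + 1 / real k) * real q ^ n"
proof -
  define cube where "cube = {..<n} \<rightarrow>\<^sub>E {..<q}"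
  define A1 where "A1 = {S \<in> cube. \<forall>a \<in> set (map S as). k \<le> a}"
  define A2 where "A2 = (\<Union>i < min k (length as). {S \<in> cube. S (as ! i) < k})"
  define A3 where "A3 = {S \<in> cube. (\<exists>a \<in> set (map S as). a < k) \<and> marker_residue k (map S as) = 0}"
  have "q > 0" using assms(1,2) by simp
  have "{S \<in> cube. good_word k (map S as)} \<subseteq> A1 \<union> A2 \<union> A3"
  proof
    fix S assume S: "S \<in> {S \<in> cube. good_word k (map S as)}"
    show "S \<in> A1 \<union> A2 \<union> A3"
    proof (cases "\<exists>a \<in> set (map S as). a < k")
      case True
      define p where "p = marker_pos k (map S as)"
      have "p < length as" "S (as ! p) < k"
        using marker_pos_eq_iff[OF True, of p] by (auto simp: p_def)
      then show ?thesis
        using S True by (cases "p < k") (auto simp: A2_def A3_def good_word_def p_def[symmetric])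
    qed (use S in \<open>auto simp: A1_def not_less\<close>)
  qed
  moreover have "finite (A1 \<union> A2 \<union> A3)" by (simp add: A1_def A2_def A3_def cube_def finite_PiE)
  ultimately have "card {S \<in> cube. good_word k (map S as)} \<le> card (A1 \<union> A2 \<union> A3)"
    by (rule card_mono[rotated])
  also have "\<dots> \<le> card A1 + card A2 + card A3"
    using card_Un_le[of "A1 \<union> A2" A3] card_Un_le[of A1 A2] by linarith
  finally have "real (card {S \<in> cube. good_word k (map S as)})
                  \<le> real (card A1) + real (card A2) + real (card A3)"
    by (simp only: of_nat_add[symmetric] of_nat_le_iff)
  moreover have "real k * real (card A3) \<le> real q ^ n"
    using card_marker_residue_zero_le[OF assms] unfolding A3_def cube_def
    by (simp only: of_nat_mult[symmetric] of_nat_power[symmetric] of_nat_le_iff)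
  then have "real (card A3) \<le> 1 / real k * real q ^ n"
    using assms(1) by (simp add: field_simps)
  ultimately show ?thesis
    using card_no_small_letter[OF assms(2) \<open>q > 0\<close> assms(3,4)]
      card_early_small_letter_le[OF assms(4) \<open>q > 0\<close>, of k]
    unfolding A1_def A2_def cube_def by (simp only: distrib_right)
qed

lemma good_words_sparse:
  assumes "k \<ge> 1" and "\<epsilon> > 0"
  obtains q L where "k \<le> q" and
    "\<And>n x. x \<in> [{..<n}]\<^bsup>L\<^esup> \<Longrightarrow>
       real (card {S \<in> {..<n} \<rightarrow>\<^sub>E {..<q}. good_word k (map S (sorted_list_of_set x))})
         \<le> (1 / real k + \<epsilon>) * real q ^ n"
proof -
  obtain q0 :: nat where q0: "2 * real k * real k / \<epsilon> < real q0"
    using reals_Archimedean2 by blast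
  define q where "q = q0 + k"
  have "k \<le> q" and "q > 0" using assms(1) by (simp_all add: q_def)
  have "2 * real k * real k < \<epsilon> * real q0" using q0 assms(2) by (simp add: field_simps)
  also have "\<dots> \<le> \<epsilon> * real q" using assms(2) by (simp add: q_def)
  finally have q: "real k * real k / real q < \<epsilon> / 2" using \<open>q > 0\<close> by (simp add: field_simps)
  have "1 - real k / real q < 1" using assms(1) \<open>q > 0\<close> by simp
  then obtain L where L: "(1 - real k / real q) ^ L < \<epsilon> / 2"
    using real_arch_pow_inv[OF _ \<open>1 - real k / real q < 1\<close>, of "\<epsilon> / 2"] assms(2) by auto
  show ?thesis
  proof (rule that[OF \<open>k \<le> q\<close>])
    fix n and x :: "nat set"
    assume "x \<in> [{..<n}]\<^bsup>L\<^esup>"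
    then have as: "distinct (sorted_list_of_set x)" "set (sorted_list_of_set x) \<subseteq> {..<n}"
      "length (sorted_list_of_set x) = L" by (auto simp: nsets_def)
    have "real (card {S \<in> {..<n} \<rightarrow>\<^sub>E {..<q}. good_word k (map S (sorted_list_of_set x))})
        \<le> ((1 - real k / real q) ^ L + real k * real k / real q + 1 / real k) * real q ^ n"
      using card_good_words_le[OF assms(1) \<open>k \<le> q\<close> as(1,2)] as(3) by simp
    also have "\<dots> \<le> (1 / real k + \<epsilon>) * real q ^ n"
      using L q by (intro mult_right_mono) (linarith, simp)
    finally show "real (card {S \<in> {..<n} \<rightarrow>\<^sub>E {..<q}. good_word k (map S (sorted_list_of_set x))})
        \<le> (1 / real k + \<epsilon>) * real q ^ n" .
  qed
qed

definition good_set :: "nat \<Rightarrow> nat \<Rightarrow> (nat \<Rightarrow> nat \<Rightarrow> nat) \<Rightarrow> nat set \<Rightarrow> nat set" where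
  "good_set k N \<sigma> x = {y \<in> {0..<N}. good_word k (map (\<sigma> y) (sorted_list_of_set x))}"

lemma good_set_subset: "good_set k N \<sigma> x \<subseteq> {0..<N}"
  by (auto simp: good_set_def)

lemma good_set_in_large_family:
  fixes \<sigma> :: "nat \<Rightarrow> nat \<Rightarrow> nat"
  assumes "k \<ge> 1" and "k_large k N \<A>" and "upward_closed N \<A>" and H: "H \<in> [B]\<^bsup>(L + k - 1)\<^esup>"
  shows "\<exists>x \<in> [H]\<^bsup>L\<^esup>. good_set k N \<sigma> x \<in> \<A>"
proof -
  define w where "w l = take L (drop l (sorted_list_of_set H))" for l
  have "\<exists>l<k. y \<in> good_set k N \<sigma> (set (w l))" if "y < N" for y
  proof -
    have "length (map (\<sigma> y) (sorted_list_of_set H)) = L + k - 1" using H by (simp add: nsets_def)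
    then obtain l where "l < k" and "good_word k (take L (drop l (map (\<sigma> y) (sorted_list_of_set H))))"
      using good_window_exists[OF assms(1)] by blast
    then have "good_word k (map (\<sigma> y) (sorted_list_of_set (set (w l))))"
      unfolding windows_in_nsets(2)[OF H \<open>l < k\<close>, folded w_def] by (simp add: w_def take_map drop_map)
    then show ?thesis using \<open>l < k\<close> \<open>y < N\<close> unfolding good_set_def by auto
  qed
  then obtain l where "l < k" and "good_set k N \<sigma> (set (w l)) \<in> \<A>"
    using k_large_cover[OF assms(2,3), of "\<lambda>l. good_set k N \<sigma> (set (w l))"] good_set_subset by auto
  moreover have "set (w l) \<in> [H]\<^bsup>L\<^esup>" using windows_in_nsets(1)[OF H \<open>l < k\<close>] by (simp add: w_def)
  ultimately show ?thesis by blast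
qed

lemma card_periodic_good_set_le:
  assumes "bij_betw e {0..<q ^ n} ({..<n} \<rightarrow>\<^sub>E {..<q})" and "q > 0"
    and "real (card {S \<in> {..<n} \<rightarrow>\<^sub>E {..<q}. good_word k (map S (sorted_list_of_set x))})
           \<le> c * real q ^ n"
  shows "real (card (good_set k N (\<lambda>y. e (y mod q ^ n)) x)) \<le> c * real N + real q ^ n"
proof -
  define Z where "Z = {S \<in> {..<n} \<rightarrow>\<^sub>E {..<q}. good_word k (map S (sorted_list_of_set x))}"
  have "q ^ n > 0" using assms(2) by simp
  have "good_set k N (\<lambda>y. e (y mod q ^ n)) x = {y \<in> {0..<N}. e (y mod q ^ n) \<in> Z}"
    using bij_betw_apply[OF assms(1)] \<open>q ^ n > 0\<close> by (auto simp: good_set_def Z_def)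
  then have "real (card (good_set k N (\<lambda>y. e (y mod q ^ n)) x))
               \<le> real N * real (card Z) / real q ^ n + real q ^ n"
    using card_periodic_preimage_le[OF assms(1) _ \<open>q ^ n > 0\<close>, of Z N] by (simp add: Z_def)
  also have "\<dots> \<le> real N * (c * real q ^ n) / real q ^ n + real q ^ n"
    using assms(3) by (intro add_right_mono divide_right_mono mult_left_mono) (simp_all add: Z_def)
  also have "\<dots> = c * real N + real q ^ n" using assms(2) by simp
  finally show ?thesis .
qed

theorem corollary2p10:
  fixes \<delta> :: real and k j :: nat
  assumes "\<delta> > 0" and "k \<ge> 1"
  shows "\<exists>N0. \<forall>N \<ge> N0. \<forall>\<A> :: nat \<Rightarrow> nat set set.
           (\<forall>j'<j. \<A> j' \<subseteq> Pow {0..<N} \<and> k_large k N (\<A> j') \<and> upward_closed N (\<A> j'))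
           \<longrightarrow> (\<exists>Z. Z \<subseteq> {0..<N} \<and> real (card Z) < (1 / real k + \<delta>) * real N
                     \<and> (\<forall>j'<j. Z \<in> \<A> j'))"
proof -
  obtain q L where "k \<le> q" and sparse: "\<And>n x. x \<in> [{..<n}]\<^bsup>L\<^esup> \<Longrightarrow>
      real (card {S \<in> {..<n} \<rightarrow>\<^sub>E {..<q}. good_word k (map S (sorted_list_of_set x))})
        \<le> (1 / real k + \<delta> / 2) * real q ^ n"
    using good_words_sparse[OF assms(2), of "\<delta> / 2"] assms(1) by auto
  have "L \<le> L + k - 1" using assms(2) by simp
  then obtain n :: nat where ramsey: "\<And>P. \<forall>H \<in> [{..<n}]\<^bsup>(L + k - 1)\<^esup>. \<forall>i<j. \<exists>x \<in> [H]\<^bsup>L\<^esup>. P i x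
      \<Longrightarrow> \<exists>x \<in> [{..<n}]\<^bsup>L\<^esup>. \<forall>i<j. P i x"
    by (rule ramsey_common_witness) (rule that)
  obtain e where e: "bij_betw e {0..<q ^ n} ({..<n} \<rightarrow>\<^sub>E {..<q})"
    using ex_bij_betw_nat_finite[of "{..<n} \<rightarrow>\<^sub>E {..<q}"] by (auto simp: card_PiE finite_PiE)
  obtain N0 :: nat where N0: "2 * real q ^ n / \<delta> < real N0" using reals_Archimedean2 by blast
  show ?thesis
  proof (rule exI[of _ N0], intro allI impI)
    fix N :: nat and \<A> :: "nat \<Rightarrow> nat set set"
    assume "N0 \<le> N" and \<A>: "\<forall>j'<j. \<A> j' \<subseteq> Pow {0..<N} \<and> k_large k N (\<A> j') \<and> upward_closed N (\<A> j')"
    define Y where "Y = good_set k N (\<lambda>y. e (y mod q ^ n))"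
    have "\<forall>H \<in> [{..<n}]\<^bsup>(L + k - 1)\<^esup>. \<forall>i<j. \<exists>x \<in> [H]\<^bsup>L\<^esup>. Y x \<in> \<A> i"
      using good_set_in_large_family[OF assms(2)] \<A> unfolding Y_def by blast
    then obtain x where x: "x \<in> [{..<n}]\<^bsup>L\<^esup>" and "\<forall>i<j. Y x \<in> \<A> i"
      using ramsey[of "\<lambda>i x. Y x \<in> \<A> i"] by blast
    have "real (card (Y x)) \<le> (1 / real k + \<delta> / 2) * real N + real q ^ n"
      unfolding Y_def using card_periodic_good_set_le[OF e _ sparse[OF x]] \<open>k \<le> q\<close> assms(2) by simp
    also have "\<dots> < (1 / real k + \<delta>) * real N"
    proof -
      have "2 * real q ^ n < \<delta> * real N0" using N0 assms(1) by (simp add: field_simps)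
      also have "\<dots> \<le> \<delta> * real N" using \<open>N0 \<le> N\<close> assms(1) by simp
      finally show ?thesis by (simp add: field_simps)
    qed
    finally show "\<exists>Z. Z \<subseteq> {0..<N} \<and> real (card Z) < (1 / real k + \<delta>) * real N \<and> (\<forall>j'<j. Z \<in> \<A> j')"
      using \<open>\<forall>i<j. Y x \<in> \<A> i\<close> by (intro exI[of _ "Y x"] conjI) (simp_all add: Y_def good_set_subset)
  qed
qed

end
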